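(* Let $G$ be a finite directed multigraph with at least one cycle, and let $H$ be its largest full subgraph (the subgraph with vertex set $V(G)$ whose edges are exactly the edges of $G$ that belong to some cycle of $G$). Then $$\dim P(G) = |E(H)| - |V(G)| + c(H) - 1,$$ where $c(H)$ is the number of connected components of $H$ (counting isolated vertices as components).
   Context: For a directed multigraph $G$: a walk is a sequence of edges $(e_1,\dots,e_k)$ with $\mathrm{ar}(e_i)=\mathrm{st}(e_{i+1})$; a cycle is a walk with $\mathrm{st}(e_1)=\mathrm{ar}(e_k)$; a path is a walk with distinct edges and distinct vertices except possibly $\mathrm{st}(e_1)=\mathrm{ar}(e_k)$; a simple cycle is a non-empty cycle that is a path. For a non-empty cycle $\mathcal{C}$, $(\vec{e}_{\mathcal{C}})_e=n_e(\mathcal{C})/|\mathcal{C}|$ for $e\in E(G)$ ($n_e$ = number of traversals of $e$, $|\mathcal{C}|$ = number of edges). $P(G)=\mathrm{conv}\{\vec{e}_{\mathcal{C}}\mid\mathcal{C}\text{ simple cycle of }G\}\subset\mathbb{R}^{E(G)}$. A subgraph $H=(V(G),E')$, $E'\subseteq E(G)$, is full if every edge of $E'$ lies on a cycle of $H$. The dimension of a polytope is that of its affine span. *)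

theory Defs
  imports "HOL-Analysis.Analysis" "Graph_Theory.Digraph"
begin

definition walk :: "('a,'b) pre_digraph \<Rightarrow> 'b list \<Rightarrow> bool" where
  "walk G es \<longleftrightarrow> set es \<subseteq> arcs G \<and>
     (\<forall>i. Suc i < length es \<longrightarrow> head G (es ! i) = tail G (es ! Suc i))"

definition is_cycle :: "('a,'b) pre_digraph \<Rightarrow> 'b list \<Rightarrow> bool" where
  "is_cycle G es \<longleftrightarrow> walk G es \<and> (es \<noteq> [] \<longrightarrow> tail G (hd es) = head G (last es))"

definition walk_verts :: "('a,'b) pre_digraph \<Rightarrow> 'b list \<Rightarrow> 'a list" where
  "walk_verts G es = map (tail G) es @ [head G (last es)]"

text \<open>A path: walk with distinct edges and distinct vertices, except possibly v_0 = v_k.\<close>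
definition is_path :: "('a,'b) pre_digraph \<Rightarrow> 'b list \<Rightarrow> bool" where
  "is_path G es \<longleftrightarrow> walk G es \<and> distinct es \<and>
     (es \<noteq> [] \<longrightarrow> distinct (butlast (walk_verts G es)) \<and> distinct (tl (walk_verts G es)))"

definition simple_cycle :: "('a,'b) pre_digraph \<Rightarrow> 'b list \<Rightarrow> bool" where
  "simple_cycle G es \<longleftrightarrow> es \<noteq> [] \<and> is_cycle G es \<and> is_path G es"

text \<open>The vector e_C: coordinate e is n_e(C)/|C|. Coordinates are indexed by the
  finite edge type; for edges of G this is exactly R^E(G), other coordinates are 0.\<close>
definition cycle_vec :: "'b list \<Rightarrow> real ^ ('b::finite)" where
  "cycle_vec es = (\<chi> e. real (count_list es e) / real (length es))"

definition cycle_polytope :: "('a,'b::finite) pre_digraph \<Rightarrow> (real ^ 'b) set" where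
  "cycle_polytope G = convex hull {cycle_vec es | es. simple_cycle G es}"

definition full_part :: "('a,'b) pre_digraph \<Rightarrow> ('a,'b) pre_digraph" where
  "full_part G = G\<lparr>arcs := {e \<in> arcs G. \<exists>es. is_cycle G es \<and> e \<in> set es}\<rparr>"

text \<open>Number of (weakly) connected components, isolated vertices counted.\<close>
definition conn_rel :: "('a,'b) pre_digraph \<Rightarrow> ('a \<times> 'a) set" where
  "conn_rel G = Id_on (verts G) \<union>
     ({(tail G e, head G e) | e. e \<in> arcs G} \<union> {(head G e, tail G e) | e. e \<in> arcs G})\<^sup>+"

definition num_components :: "('a,'b) pre_digraph \<Rightarrow> nat" where
  "num_components G = card (verts G // conn_rel G)"

end

theory Submission
  imports Defs
begin

text \<open>The simple-cycle vectors lie on the hyperplane where the coordinates sum to 1, so the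
  affine dimension of P(G) is one less than the dimension of their span. That span is the cycle
  space of the full part H: the vectors supported on E(H) orthogonal to all rows of its incidence
  matrix. Cycles lie in it since a closed walk enters each vertex as often as it leaves it.
  Conversely, a vector orthogonal to all simple cycles vanishes on every closed walk (closed walks
  decompose into simple cycles); since every arc of H lies on a cycle, it is then a potential
  difference on E(H), i.e. a combination of incidence rows, and so orthogonal to the cycle space.
  Finally, a combination of incidence rows vanishes iff its coefficients are constant on the
  components of H, so the rows span a space of dimension |V| - c(H).\<close>

section \<open>Walks and cycles\<close>

lemma walk_Nil [simp]: "walk G []"
  by (simp add: walk_def)

lemma walk_Cons:
  "walk G (e # es) \<longleftrightarrow> e \<in> arcs G \<and> walk G es \<and> (es \<noteq> [] \<longrightarrow> head G e = tail G (hd es))"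
proof
  assume w: "walk G (e # es)"
  have "walk G es" unfolding walk_def
  proof (intro conjI allI impI)
    show "set es \<subseteq> arcs G" using w by (auto simp: walk_def)
    fix i assume "Suc i < length es"
    then have "Suc (Suc i) < length (e # es)" by simp
    with w show "head G (es ! i) = tail G (es ! Suc i)" unfolding walk_def by fastforce
  qed
  with w show "e \<in> arcs G \<and> walk G es \<and> (es \<noteq> [] \<longrightarrow> head G e = tail G (hd es))"
    unfolding walk_def by (cases es) auto
next
  assume "e \<in> arcs G \<and> walk G es \<and> (es \<noteq> [] \<longrightarrow> head G e = tail G (hd es))"
  then show "walk G (e # es)"
    unfolding walk_def by (auto simp: nth_Cons hd_conv_nth split: nat.splits)
qed

lemma walk_append:
  "walk G (xs @ ys) \<longleftrightarrow>
     walk G xs \<and> walk G ys \<and> (xs \<noteq> [] \<longrightarrow> ys \<noteq> [] \<longrightarrow> head G (last xs) = tail G (hd ys))"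
  by (induction xs) (auto simp: walk_Cons)

lemma is_cycle_rotate1: "is_cycle G es \<Longrightarrow> is_cycle G (rotate1 es)"
  by (cases es) (auto simp: is_cycle_def walk_append walk_Cons hd_append split: if_splits)

lemma is_cycle_rotate: "is_cycle G es \<Longrightarrow> is_cycle G (rotate n es)"
  by (induction n) (auto simp: is_cycle_rotate1)

lemma is_cycle_append_split:
  assumes "is_cycle G (xs @ ys)" "xs \<noteq> []" "ys \<noteq> []" "tail G (hd xs) = tail G (hd ys)"
  shows "is_cycle G xs" "is_cycle G ys"
  using assms by (auto simp: is_cycle_def walk_append)

lemma map_head_cycle:
  assumes "is_cycle G es"
  shows "map (head G) es = rotate1 (map (tail G) es)"
proof (rule nth_equalityI)
  fix i assume i: "i < length (map (head G) es)"
  show "map (head G) es ! i = rotate1 (map (tail G) es) ! i"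
  proof (cases "Suc i < length es")
    case True
    then show ?thesis using assms by (simp add: nth_rotate1 is_cycle_def walk_def)
  next
    case False
    then have "i = length es - 1" "es \<noteq> []" using i by auto
    then show ?thesis using assms by (simp add: nth_rotate1 is_cycle_def hd_conv_nth last_conv_nth)
  qed
qed simp

lemma simple_cycleI:
  assumes "is_cycle G es" "es \<noteq> []" "distinct (map (tail G) es)"
  shows "simple_cycle G es"
proof -
  obtain e es' where es: "es = e # es'" using assms(2) by (cases es) auto
  have "head G (last es) = tail G e" using assms(1) es by (simp add: is_cycle_def)
  then have "tl (walk_verts G es) = map (tail G) es' @ [tail G e]"
    using es by (simp add: walk_verts_def)
  then show ?thesis
    using assms es distinct_map
    by (auto simp: simple_cycle_def is_path_def is_cycle_def walk_verts_def)
qed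

lemma non_simple_cycle_split:
  assumes "is_cycle G es" "\<not> distinct (map (tail G) es)"
  obtains xs ys where "is_cycle G xs" "is_cycle G ys" "xs \<noteq> []" "ys \<noteq> []"
    "mset es = mset xs + mset ys"
proof -
  obtain ws1 v ws2 ws3 where "map (tail G) es = ws1 @ [v] @ ws2 @ [v] @ ws3"
    using not_distinct_decomp[OF assms(2)] by blast
  then obtain us vs where "es = us @ vs" "map (tail G) vs = v # ws2 @ v # ws3"
    by (auto simp: map_eq_append_conv)
  then obtain a rest where "es = us @ a # rest" "tail G a = v" "v \<in> set (map (tail G) rest)"
    by (auto simp: map_eq_Cons_conv simp del: set_map)
  moreover from this obtain c where "c \<in> set rest" "tail G c = v" by auto
  moreover from this obtain bs cs where "rest = bs @ c # cs" by (meson split_list)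
  ultimately have es: "es = us @ [a] @ bs @ [c] @ cs" and "tail G a = tail G c" by simp_all
  moreover have "is_cycle G ((a # bs) @ (c # cs @ us))"
    using is_cycle_rotate[OF assms(1), of "length us"] es by (simp add: rotate_append)
  ultimately show thesis
    using that is_cycle_append_split[of G "a # bs" "c # cs @ us"] by (simp add: es ac_simps)
qed

section \<open>Arc-count vectors of cycles\<close>

definition count_vec :: "'b list \<Rightarrow> real ^ 'b::finite" where
  "count_vec es = (\<chi> e. real (count_list es e))"

definition simple_cycle_vecs :: "('a, 'b::finite) pre_digraph \<Rightarrow> (real ^ 'b) set" where
  "simple_cycle_vecs G = {cycle_vec es | es. simple_cycle G es}"

lemma count_vec_Nil [simp]: "count_vec [] = 0"
  by (simp add: count_vec_def vec_eq_iff)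

lemma count_vec_append: "count_vec (xs @ ys) = count_vec xs + count_vec ys"
  by (simp add: count_vec_def vec_eq_iff)

lemma count_vec_mset_eq: "mset xs = mset ys \<Longrightarrow> count_vec xs = count_vec ys"
  by (simp add: count_vec_def vec_eq_iff flip: count_mset)

lemma count_vec_eq_scaleR_cycle_vec: "count_vec es = real (length es) *\<^sub>R cycle_vec es"
  by (simp add: count_vec_def cycle_vec_def vec_eq_iff)

lemma count_vec_Cons: "count_vec (e # es) = axis e 1 + count_vec es"
  by (simp add: count_vec_def vec_eq_iff axis_def)

lemma inner_count_vec: "x \<bullet> count_vec es = (\<Sum>e\<leftarrow>es. x $ e)"
  by (induction es) (auto simp: count_vec_Cons inner_add_right inner_axis)

lemma count_vec_cycle_in_span:
  "is_cycle G es \<Longrightarrow> count_vec es \<in> span (simple_cycle_vecs G)"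
proof (induction "length es" arbitrary: es rule: less_induct)
  case less
  show ?case
  proof (cases "es = []")
    case False
    show ?thesis
    proof (cases "distinct (map (tail G) es)")
      case True
      with False less.prems have "cycle_vec es \<in> simple_cycle_vecs G"
        by (auto simp: simple_cycle_vecs_def intro: simple_cycleI)
      then show ?thesis by (simp add: count_vec_eq_scaleR_cycle_vec span_mul span_base)
    next
      case False
      then obtain xs ys where xs: "is_cycle G xs" "xs \<noteq> []" and ys: "is_cycle G ys" "ys \<noteq> []"
        and split: "mset es = mset xs + mset ys"
        using non_simple_cycle_split[OF less.prems] by metis
      have "length es = length xs + length ys"
        using arg_cong[OF split, of size] by simp
      then have "count_vec xs \<in> span (simple_cycle_vecs G)"
        "count_vec ys \<in> span (simple_cycle_vecs G)"
        using less.hyps xs ys by auto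
      moreover have "count_vec es = count_vec xs + count_vec ys"
        using split by (simp add: count_vec_mset_eq[of es "xs @ ys"] count_vec_append)
      ultimately show ?thesis by (simp add: span_add)
    qed
  qed (simp add: span_zero)
qed

section \<open>Components and potentials\<close>

lemma full_part_simps [simp]:
  "verts (full_part G) = verts G" "tail (full_part G) = tail G" "head (full_part G) = head G"
  "arcs (full_part G) = {e \<in> arcs G. \<exists>es. is_cycle G es \<and> e \<in> set es}"
  by (simp_all add: full_part_def)

lemma fin_digraph_full_part: "fin_digraph G \<Longrightarrow> fin_digraph (full_part G)"
  by (auto simp: fin_digraph_def fin_digraph_axioms_def wf_digraph_def)

lemma wf_digraph_full_part: "wf_digraph G \<Longrightarrow> wf_digraph (full_part G)"
  by (auto simp: wf_digraph_def)

lemma is_cycle_full_part: "is_cycle G es \<Longrightarrow> is_cycle (full_part G) es"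
  by (auto simp: is_cycle_def walk_def)

definition walk_betw :: "('a, 'b) pre_digraph \<Rightarrow> 'a \<Rightarrow> 'b list \<Rightarrow> 'a \<Rightarrow> bool" where
  "walk_betw G u es v \<longleftrightarrow>
     walk G es \<and> (if es = [] then u = v else tail G (hd es) = u \<and> head G (last es) = v)"

lemma walk_betw_Nil: "walk_betw G u [] u"
  by (simp add: walk_betw_def)

lemma walk_betw_arc: "e \<in> arcs G \<Longrightarrow> walk_betw G (tail G e) [e] (head G e)"
  by (simp add: walk_betw_def walk_Cons)

lemma walk_betw_append:
  "walk_betw G u xs v \<Longrightarrow> walk_betw G v ys w \<Longrightarrow> walk_betw G u (xs @ ys) w"
  by (auto simp: walk_betw_def walk_append split: if_splits)

lemma is_cycle_walk_betw: "walk_betw G u es u \<Longrightarrow> is_cycle G es"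
  by (auto simp: walk_betw_def is_cycle_def split: if_splits)

lemma walk_betw_is_cycle_Cons: "is_cycle G (e # es) \<Longrightarrow> walk_betw G (head G e) es (tail G e)"
  by (cases "es = []") (auto simp: walk_betw_def is_cycle_def walk_Cons)

lemma full_part_arc_walk_back:
  assumes "e \<in> arcs (full_part G)"
  obtains es where "walk_betw G (head G e) es (tail G e)"
proof -
  obtain cs where cs: "is_cycle G cs" "e \<in> set cs" using assms by auto
  then obtain xs ys where "cs = xs @ e # ys" by (meson split_list)
  then have "is_cycle G (e # ys @ xs)"
    using is_cycle_rotate[OF cs(1), of "length xs"] by (simp add: rotate_append)
  then show thesis by (rule that[OF walk_betw_is_cycle_Cons])
qed

lemma arc_in_conn_rel: "e \<in> arcs G \<Longrightarrow> (tail G e, head G e) \<in> conn_rel G"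
  by (auto simp: conn_rel_def)

lemma conn_rel_invariant:
  assumes "\<And>e. e \<in> arcs G \<Longrightarrow> f (tail G e) = f (head G e)" and "(u, v) \<in> conn_rel G"
  shows "f u = f v"
proof -
  let ?S = "{(tail G e, head G e) | e. e \<in> arcs G} \<union> {(head G e, tail G e) | e. e \<in> arcs G}"
  have "f x = f y" if "(x, y) \<in> ?S\<^sup>+" for x y
    using that by (induction rule: trancl_induct) (auto simp: assms(1))
  with assms(2) show ?thesis by (auto simp: conn_rel_def)
qed

lemma (in wf_digraph) equiv_conn_rel: "equiv (verts G) (conn_rel G)"
proof -
  let ?S = "{(tail G e, head G e) | e. e \<in> arcs G} \<union> {(head G e, tail G e) | e. e \<in> arcs G}"
  have sub: "?S\<^sup>+ \<subseteq> verts G \<times> verts G" by (rule trancl_subset_Sigma) auto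
  have "sym (?S\<^sup>+)" by (rule sym_trancl) (auto simp: sym_def)
  with sub show ?thesis
    unfolding conn_rel_def equiv_def refl_on_def sym_def trans_def
    by (blast intro: trancl_trans)
qed

lemma conn_rel_full_part_walk_betw:
  assumes "(u, v) \<in> conn_rel (full_part G)"
  obtains es where "walk_betw G u es v"
proof -
  have "(\<exists>es. walk_betw G u es u) = (\<exists>es. walk_betw G u es v)"
  proof (rule conn_rel_invariant[OF _ assms])
    fix e assume e: "e \<in> arcs (full_part G)"
    then obtain bs where "walk_betw G (head G e) bs (tail G e)" by (rule full_part_arc_walk_back)
    moreover have "walk_betw G (tail G e) [e] (head G e)" using e by (simp add: walk_betw_arc)
    ultimately show "(\<exists>es. walk_betw G u es (tail (full_part G) e)) =
        (\<exists>es. walk_betw G u es (head (full_part G) e))"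
      by (auto intro: walk_betw_append)
  qed
  then show thesis using that walk_betw_Nil[of G u] by blast
qed

text \<open>The potential of a vertex is the weight of a walk to it from a fixed representative
  of its component; this is well defined since two such walks close up to cycles with a common
  walk back to the representative.\<close>

lemma (in wf_digraph) potential_of_zero_cycle_sums:
  fixes w :: "'b \<Rightarrow> real"
  assumes zero: "\<And>es. is_cycle G es \<Longrightarrow> (\<Sum>e\<leftarrow>es. w e) = 0"
  shows "\<exists>p. \<forall>e\<in>arcs (full_part G). w e = p (head G e) - p (tail G e)"
proof -
  let ?R = "conn_rel (full_part G)"
  have eqv: "equiv (verts G) ?R"
    using wf_digraph.equiv_conn_rel[OF wf_digraph_full_part[OF wf_digraph]]
    by (simp only: full_part_simps)
  define rep where "rep v = (SOME u. u \<in> ?R `` {v})" for v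
  define path where "path v = (SOME es. walk_betw G (rep v) es v)" for v
  define p where "p v = (\<Sum>e\<leftarrow>path v. w e)" for v
  have rep: "(v, rep v) \<in> ?R" if "v \<in> verts G" for v
  proof -
    have "v \<in> ?R `` {v}" using eqv that by (auto simp: equiv_def refl_on_def)
    then have "rep v \<in> ?R `` {v}" unfolding rep_def by (rule someI)
    then show ?thesis by simp
  qed
  have rep_sym: "(rep v, v) \<in> ?R" if "v \<in> verts G" for v
    using rep[OF that] eqv by (auto simp: equiv_def sym_def)
  have path: "walk_betw G (rep v) (path v) v" if v: "v \<in> verts G" for v
  proof -
    obtain es where "walk_betw G (rep v) es v"
      using rep_sym[OF v] by (rule conn_rel_full_part_walk_betw)
    then show ?thesis unfolding path_def by (rule someI)
  qed
  have "w e = p (head G e) - p (tail G e)" if e: "e \<in> arcs (full_part G)" for e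
  proof -
    have "(tail G e, head G e) \<in> ?R" using arc_in_conn_rel[OF e] by simp
    then have same_rep: "rep (tail G e) = rep (head G e)"
      using equiv_class_eq[OF eqv] by (simp add: rep_def)
    have verts: "tail G e \<in> verts G" "head G e \<in> verts G" using e by auto
    obtain return where return: "walk_betw G (head G e) return (rep (head G e))"
      using rep[OF verts(2)] by (rule conn_rel_full_part_walk_betw)
    have "e \<in> arcs G" using e by simp
    then have "walk_betw G (rep (tail G e)) (path (tail G e) @ [e] @ return) (rep (head G e))"
      by (intro walk_betw_append[OF path[OF verts(1)] walk_betw_append[OF walk_betw_arc return]])
    then have closed:
      "walk_betw G (rep (head G e)) (path (tail G e) @ [e] @ return) (rep (head G e))"
      by (simp only: same_rep)
    have "(\<Sum>e\<leftarrow>path (tail G e). w e) + w e + (\<Sum>e\<leftarrow>return. w e) = 0"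
      using zero[OF is_cycle_walk_betw[OF closed]] by simp
    moreover have "(\<Sum>e\<leftarrow>path (head G e). w e) + (\<Sum>e\<leftarrow>return. w e) = 0"
      using zero[OF is_cycle_walk_betw[OF walk_betw_append[OF path[OF verts(2)] return]]] by simp
    ultimately show ?thesis by (simp add: p_def)
  qed
  then show ?thesis by blast
qed

section \<open>Cut space and cycle space\<close>

definition supported_on :: "'b set \<Rightarrow> (real ^ 'b::finite) set" where
  "supported_on A = {x. \<forall>e. e \<notin> A \<longrightarrow> x $ e = 0}"

lemma supported_on_eq_span: "supported_on A = span ((\<lambda>e. axis e 1) ` A)"
proof
  show "span ((\<lambda>e. axis e 1) ` A) \<subseteq> supported_on A"
    by (rule span_minimal) (auto simp: supported_on_def subspace_def axis_def)
  show "supported_on A \<subseteq> span ((\<lambda>e. axis e 1) ` A)"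
  proof
    fix x assume x: "x \<in> supported_on A"
    have "x = (\<Sum>e\<in>UNIV. x $ e *\<^sub>R axis e 1)"
      by (simp add: basis_expansion flip: scalar_mult_eq_scaleR)
    also have "\<dots> = (\<Sum>e\<in>A. x $ e *\<^sub>R axis e 1)"
      using x by (intro sum.mono_neutral_right) (auto simp: supported_on_def)
    also have "\<dots> \<in> span ((\<lambda>e. axis e 1) ` A)"
      by (intro span_sum span_scale span_base) blast
    finally show "x \<in> span ((\<lambda>e. axis e 1) ` A)" .
  qed
qed

lemma subspace_supported_on: "subspace (supported_on A)"
  by (simp add: supported_on_eq_span subspace_span)

lemma dim_supported_on: "dim (supported_on A) = card A"
proof -
  have "(\<lambda>e. axis e (1::real)) ` A \<subseteq> Basis" by (auto simp: Basis_real_def)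
  then have "independent ((\<lambda>e. axis e (1::real)) ` A)"
    by (metis independent_mono independent_Basis)
  moreover have "inj_on (\<lambda>e. axis e (1::real)) A" by (auto simp: inj_on_def axis_eq_axis)
  ultimately show ?thesis
    by (simp add: supported_on_eq_span dim_eq_card_independent card_image)
qed

lemma inner_eq_if_eq_on_support:
  assumes "x \<in> supported_on A" "\<And>e. e \<in> A \<Longrightarrow> y $ e = z $ e"
  shows "y \<bullet> x = z \<bullet> x"
  unfolding inner_vec_def using assms by (intro sum.cong) (auto simp: supported_on_def)

lemma dim_span_image_eq_card:
  fixes f :: "'i \<Rightarrow> 'v::euclidean_space"
  assumes "finite A" and coeffs: "\<And>c. (\<Sum>a\<in>A. c a *\<^sub>R f a) = 0 \<Longrightarrow> \<forall>a\<in>A. c a = 0"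
  shows "dim (span (f ` A)) = card A"
proof -
  have inj: "inj_on f A"
  proof (rule inj_onI, rule ccontr)
    fix a b assume ab: "a \<in> A" "b \<in> A" "f a = f b" "a \<noteq> b"
    define c where "c x = (if x = a then 1 else if x = b then -1 else (0::real))" for x
    have "(\<Sum>x\<in>A. c x *\<^sub>R f x) =
        (\<Sum>x\<in>A. (if x = a then f x else 0) - (if x = b then f x else 0))"
      using ab by (intro sum.cong) (auto simp: c_def)
    also have "\<dots> = 0" using ab \<open>finite A\<close> by (simp add: sum_subtractf)
    finally show False using coeffs ab by (force simp: c_def)
  qed
  have "independent (f ` A)"
    unfolding independent_explicit
  proof (intro conjI allI impI ballI)
    show "finite (f ` A)" using \<open>finite A\<close> by simp
    fix u v assume "(\<Sum>v\<in>f ` A. u v *\<^sub>R v) = 0" "v \<in> f ` A"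
    then show "u v = 0" using coeffs[of "u \<circ> f"] by (auto simp: sum.reindex[OF inj])
  qed
  then show ?thesis by (simp add: dim_eq_card_independent card_image[OF inj])
qed

definition incidence_vec :: "('a, 'b::finite) pre_digraph \<Rightarrow> 'a \<Rightarrow> real ^ 'b" where
  "incidence_vec G v =
     (\<chi> e. if e \<in> arcs G then of_bool (head G e = v) - of_bool (tail G e = v) else 0)"

definition cut_space :: "('a, 'b::finite) pre_digraph \<Rightarrow> (real ^ 'b) set" where
  "cut_space G = span (incidence_vec G ` verts G)"

definition cycle_space :: "('a, 'b::finite) pre_digraph \<Rightarrow> (real ^ 'b) set" where
  "cycle_space G = {x \<in> supported_on (arcs G). \<forall>y\<in>cut_space G. orthogonal y x}"

lemma cut_space_subset_supported_on: "cut_space G \<subseteq> supported_on (arcs G)"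
  unfolding cut_space_def
  by (rule span_minimal[OF _ subspace_supported_on]) (auto simp: supported_on_def incidence_vec_def)

lemma subspace_cycle_space: "subspace (cycle_space G)"
  unfolding cycle_space_def supported_on_def subspace_def by (auto simp: orthogonal_clauses)

lemma inner_incidence_vec_cycle:
  assumes "is_cycle G es"
  shows "incidence_vec G v \<bullet> count_vec es = 0"
proof -
  have "set es \<subseteq> arcs G" using assms by (simp add: is_cycle_def walk_def)
  then have "incidence_vec G v \<bullet> count_vec es =
      (\<Sum>e\<leftarrow>es. of_bool (head G e = v) - (of_bool (tail G e = v) :: real))"
    unfolding inner_count_vec
    by (intro arg_cong[where f = sum_list] map_cong) (auto simp: incidence_vec_def)
  also have "\<dots> =
      (\<Sum>e\<leftarrow>es. of_bool (head G e = v)) - (\<Sum>e\<leftarrow>es. (of_bool (tail G e = v) :: real))"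
    by (simp add: sum_list_subtractf)
  also have "(\<Sum>e\<leftarrow>es. of_bool (head G e = v)) =
      (\<Sum>x\<leftarrow>rotate1 (map (tail G) es). (of_bool (x = v) :: real))"
    by (simp flip: map_head_cycle[OF assms] add: comp_def)
  also have "\<dots> = (\<Sum>e\<leftarrow>es. of_bool (tail G e = v))"
    by (cases es) (simp_all add: add.commute comp_def)
  finally show ?thesis by simp
qed

lemma count_vec_cycle_in_cycle_space:
  assumes "is_cycle G es"
  shows "count_vec es \<in> cycle_space G"
proof -
  have "set es \<subseteq> arcs G" using assms by (simp add: is_cycle_def walk_def)
  then have "count_vec es \<in> supported_on (arcs G)"
    by (auto simp: supported_on_def count_vec_def count_list_0_iff)
  moreover have "orthogonal y (count_vec es)" if "y \<in> cut_space G" for y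
    using that unfolding cut_space_def orthogonal_commute[of y]
    by (rule orthogonal_to_span)
      (auto simp: orthogonal_def inner_commute[of "count_vec es"]
        inner_incidence_vec_cycle[OF assms])
  ultimately show ?thesis by (simp add: cycle_space_def)
qed

lemma simple_cycle_vecs_subset_cycle_space: "simple_cycle_vecs G \<subseteq> cycle_space (full_part G)"
proof
  fix x assume "x \<in> simple_cycle_vecs G"
  then obtain es where es: "simple_cycle G es" "x = cycle_vec es"
    by (auto simp: simple_cycle_vecs_def)
  then have "x = (1 / real (length es)) *\<^sub>R count_vec es"
    by (simp add: count_vec_eq_scaleR_cycle_vec simple_cycle_def)
  moreover have "count_vec es \<in> cycle_space (full_part G)"
    using es by (intro count_vec_cycle_in_cycle_space is_cycle_full_part) (simp add: simple_cycle_def)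
  ultimately show "x \<in> cycle_space (full_part G)"
    by (simp add: subspace_mul[OF subspace_cycle_space])
qed

locale finite_arc_type_digraph = fin_digraph G for G :: "('a, 'b::finite) pre_digraph"
begin

lemma incidence_combination_nth:
  assumes "e \<in> arcs G"
  shows "(\<Sum>v\<in>verts G. c v *\<^sub>R incidence_vec G v) $ e = c (head G e) - c (tail G e)"
proof -
  have "(\<Sum>v\<in>verts G. c v *\<^sub>R incidence_vec G v) $ e =
      (\<Sum>v\<in>verts G. (if v = head G e then c v else 0) - (if v = tail G e then c v else 0))"
    using assms by (auto simp: sum_component incidence_vec_def intro!: sum.cong)
  also have "\<dots> = c (head G e) - c (tail G e)"
    using assms by (simp add: sum_subtractf)
  finally show ?thesis .
qed

lemma incidence_combination_eq_0_const_on_components: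
  assumes "(\<Sum>v\<in>verts G. c v *\<^sub>R incidence_vec G v) = 0" "(u, w) \<in> conn_rel G"
  shows "c u = c w"
proof -
  have "c (tail G e) = c (head G e)" if "e \<in> arcs G" for e
    using incidence_combination_nth[OF that, of c] assms(1) by simp
  then show ?thesis using assms(2) by (rule conn_rel_invariant)
qed

lemma sum_incidence_vec_component:
  assumes K: "K \<in> verts G // conn_rel G"
  shows "(\<Sum>v\<in>K. incidence_vec G v) = 0"
proof -
  have "K \<subseteq> verts G" using K equiv_conn_rel by (simp add: in_quotient_imp_subset)
  then have "(\<Sum>v\<in>K. incidence_vec G v) =
      (\<Sum>v\<in>verts G. of_bool (v \<in> K) *\<^sub>R incidence_vec G v)"
    by (intro sum.mono_neutral_cong_left) auto
  also have "\<dots> = 0"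
  proof (subst vec_eq_iff, intro allI)
    fix e
    show "(\<Sum>v\<in>verts G. of_bool (v \<in> K) *\<^sub>R incidence_vec G v) $ e = 0 $ e"
    proof (cases "e \<in> arcs G")
      case True
      then have "head G e \<in> K \<longleftrightarrow> tail G e \<in> K"
        using in_quotient_imp_closed[OF equiv_conn_rel K] arc_in_conn_rel[OF True]
          equiv_conn_rel by (auto elim: equivE simp: sym_def)
      then show ?thesis
        using incidence_combination_nth[OF True, of "\<lambda>v. of_bool (v \<in> K)"] by simp
    qed (simp add: incidence_vec_def sum_component)
  qed
  finally show ?thesis .
qed

text \<open>Dropping the incidence vector of one representative per component leaves a basis of
  the cut space.\<close>

context
  fixes rep :: "'a set \<Rightarrow> 'a"
  assumes rep_in: "\<And>K. K \<in> verts G // conn_rel G \<Longrightarrow> rep K \<in> K"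
begin

lemma rep_in_component_iff:
  assumes "K \<in> verts G // conn_rel G" "K' \<in> verts G // conn_rel G"
  shows "rep K' \<in> K \<longleftrightarrow> K' = K"
  using quotient_disj[OF equiv_conn_rel assms] rep_in[OF assms(2)] rep_in[OF assms(1)] by blast

lemma span_incidence_vec_nonreps:
  "span (incidence_vec G ` (verts G - rep ` (verts G // conn_rel G))) = cut_space G"
proof
  let ?N = "verts G - rep ` (verts G // conn_rel G)"
  show "span (incidence_vec G ` ?N) \<subseteq> cut_space G"
    unfolding cut_space_def by (intro span_mono) blast
  have "incidence_vec G (rep K) \<in> span (incidence_vec G ` ?N)"
    if K: "K \<in> verts G // conn_rel G" for K
  proof -
    have "K \<subseteq> verts G" using K equiv_conn_rel by (simp add: in_quotient_imp_subset)
    moreover from this have "finite K" by (rule finite_subset) simp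
    ultimately have "incidence_vec G (rep K) = - (\<Sum>v\<in>K - {rep K}. incidence_vec G v)"
      using sum_incidence_vec_component[OF K] rep_in[OF K]
      by (simp add: sum.remove eq_neg_iff_add_eq_0)
    moreover have "K - {rep K} \<subseteq> ?N"
      using \<open>K \<subseteq> verts G\<close> rep_in_component_iff[OF K] by auto
    then have "(\<Sum>v\<in>K - {rep K}. incidence_vec G v) \<in> span (incidence_vec G ` ?N)"
      by (intro span_sum span_base) blast
    ultimately show ?thesis by (simp add: span_neg)
  qed
  then have "incidence_vec G ` verts G \<subseteq> span (incidence_vec G ` ?N)"
    by (auto intro: span_base)
  then show "cut_space G \<subseteq> span (incidence_vec G ` ?N)"
    unfolding cut_space_def by (simp add: span_minimal)
qed

lemma incidence_vec_nonreps_coeffs_eq_0: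
  assumes "(\<Sum>v\<in>verts G - rep ` (verts G // conn_rel G). c v *\<^sub>R incidence_vec G v) = 0"
    and v: "v \<in> verts G - rep ` (verts G // conn_rel G)"
  shows "c v = 0"
proof -
  let ?N = "verts G - rep ` (verts G // conn_rel G)"
  define c' where "c' v = (if v \<in> ?N then c v else 0)" for v
  have "(\<Sum>v\<in>verts G. c' v *\<^sub>R incidence_vec G v) = (\<Sum>v\<in>?N. c v *\<^sub>R incidence_vec G v)"
    by (rule sum.mono_neutral_cong_right) (auto simp: c'_def)
  then have zero: "(\<Sum>v\<in>verts G. c' v *\<^sub>R incidence_vec G v) = 0" using assms(1) by simp
  let ?K = "conn_rel G `` {v}"
  have K: "?K \<in> verts G // conn_rel G" using v by (auto intro: quotientI)
  then have "(v, rep ?K) \<in> conn_rel G" using rep_in by blast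
  then have "c' v = c' (rep ?K)" by (rule incidence_combination_eq_0_const_on_components[OF zero])
  moreover have "c' v = c v" using v unfolding c'_def by (rule if_P)
  moreover have "c' (rep ?K) = 0"
    unfolding c'_def using imageI[of ?K _ rep, OF K] by (intro if_not_P) blast
  ultimately show ?thesis by linarith
qed

end

lemma dim_cut_space: "dim (cut_space G) + num_components G = card (verts G)"
proof -
  define rep where "rep K = (SOME v. v \<in> K)" for K :: "'a set"
  have rep: "rep K \<in> K" if "K \<in> verts G // conn_rel G" for K
    unfolding rep_def using in_quotient_imp_non_empty[OF equiv_conn_rel that]
    by (rule some_in_eq[THEN iffD2])
  let ?reps = "rep ` (verts G // conn_rel G)"
  have "inj_on rep (verts G // conn_rel G)"
  proof (rule inj_onI)
    fix K K' assume "K \<in> verts G // conn_rel G" "K' \<in> verts G // conn_rel G" "rep K = rep K'"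
    then show "K = K'" using rep_in_component_iff[OF rep, of K K'] rep[of K] by simp
  qed
  then have "card ?reps = num_components G" by (simp add: card_image num_components_def)
  moreover have reps: "?reps \<subseteq> verts G"
    using rep in_quotient_imp_subset[OF equiv_conn_rel] by blast
  moreover have "dim (span (incidence_vec G ` (verts G - ?reps))) = card (verts G - ?reps)"
    by (rule dim_span_image_eq_card) (use incidence_vec_nonreps_coeffs_eq_0[OF rep] in auto)
  then have "dim (cut_space G) = card (verts G - ?reps)"
    by (simp add: span_incidence_vec_nonreps[OF rep])
  ultimately show ?thesis
    using card_mono[OF finite_verts reps] card_Diff_subset[OF finite_subset[OF reps] reps]
    by simp
qed

lemma dim_cycle_space:
  "dim (cycle_space G) + card (verts G) = card (arcs G) + num_components G"
proof -
  have "dim (cycle_space G) + dim (cut_space G) = dim (supported_on (arcs G))"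
    unfolding cycle_space_def
    by (rule dim_subspace_orthogonal_to_vectors[OF _ subspace_supported_on
          cut_space_subset_supported_on])
      (simp add: cut_space_def subspace_span)
  then show ?thesis using dim_cut_space dim_supported_on[of "arcs G"] by linarith
qed

text \<open>A vector orthogonal to all simple cycles vanishes on all cycles, hence is a potential
  difference on the full part, hence agrees there with a vector of its cut space.\<close>

lemma cycle_space_full_part_subset_span:
  "cycle_space (full_part G) \<subseteq> span (simple_cycle_vecs G)"
proof
  interpret H: finite_arc_type_digraph "full_part G"
    using fin_digraph_full_part[OF fin_digraph] by (simp add: finite_arc_type_digraph_def)
  fix x assume x: "x \<in> cycle_space (full_part G)"
  obtain y q where y: "y \<in> span (simple_cycle_vecs G)"
    and q: "\<And>z. z \<in> span (simple_cycle_vecs G) \<Longrightarrow> orthogonal q z" and xyq: "x = y + q"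
    using orthogonal_subspace_decomp_exists by blast
  have "(\<Sum>e\<leftarrow>es. q $ e) = 0" if "is_cycle G es" for es
    using q[OF count_vec_cycle_in_span[OF that]] by (simp add: orthogonal_def inner_count_vec)
  then obtain p where p: "\<forall>e\<in>arcs (full_part G). q $ e = p (head G e) - p (tail G e)"
    using potential_of_zero_cycle_sums by blast
  define z where "z = (\<Sum>v\<in>verts G. p v *\<^sub>R incidence_vec (full_part G) v)"
  have "z \<in> cut_space (full_part G)"
    by (simp add: z_def cut_space_def span_sum span_mul span_base)
  then have "z \<bullet> x = 0" using x by (simp add: cycle_space_def orthogonal_def)
  moreover have "q \<bullet> x = z \<bullet> x"
    using x p H.incidence_combination_nth
    by (intro inner_eq_if_eq_on_support[of _ "arcs (full_part G)"])
      (auto simp: cycle_space_def z_def)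
  moreover have "q \<bullet> y = 0" using q[OF y] by (simp add: orthogonal_def)
  ultimately have "q \<bullet> q = 0" using xyq by (simp add: inner_add_right)
  then show "x \<in> span (simple_cycle_vecs G)" using xyq y by simp
qed

lemma span_simple_cycle_vecs: "span (simple_cycle_vecs G) = cycle_space (full_part G)"
  using cycle_space_full_part_subset_span
    span_minimal[OF simple_cycle_vecs_subset_cycle_space subspace_cycle_space]
  by (rule subset_antisym[rotated])

end

section \<open>The cycle polytope\<close>

lemma aff_dim_subset_hyperplane:
  fixes S :: "'v::euclidean_space set"
  assumes "S \<subseteq> {x. a \<bullet> x = 1}"
  shows "aff_dim S = int (dim S) - 1"
proof -
  have "affine hull S \<subseteq> {x. a \<bullet> x = 1}"
    using assms by (intro hull_minimal affine_hyperplane)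
  then have "aff_dim (insert 0 S) = aff_dim S + 1" by (auto simp: aff_dim_insert)
  moreover have "aff_dim (insert 0 S) = int (dim (insert 0 S))"
    by (rule aff_dim_zero) (simp add: hull_inc)
  moreover have "dim (insert 0 S) = dim S" by (metis dim_span span_insert_0)
  ultimately show ?thesis by simp
qed

lemma simple_cycle_vecs_subset_hyperplane:
  "simple_cycle_vecs G \<subseteq> {x. (\<chi> e. 1) \<bullet> x = 1}"
proof
  fix x assume "x \<in> simple_cycle_vecs G"
  then obtain es where "simple_cycle G es" "x = cycle_vec es" by (auto simp: simple_cycle_vecs_def)
  moreover have "(\<chi> e. 1) \<bullet> count_vec es = real (length es)"
    by (simp add: inner_count_vec sum_list_triv)
  ultimately show "x \<in> {x. (\<chi> e. 1) \<bullet> x = 1}"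
    by (simp add: count_vec_eq_scaleR_cycle_vec simple_cycle_def)
qed

theorem mainTheorem4:
  fixes G :: "('a, 'b::finite) pre_digraph"
  assumes "fin_digraph G"
    and "\<exists>es. is_cycle G es \<and> es \<noteq> []"
  shows "aff_dim (cycle_polytope G) =
    int (card (arcs (full_part G))) - int (card (verts G)) + int (num_components (full_part G)) - 1"
proof -
  interpret finite_arc_type_digraph G
    using assms(1) by (simp add: finite_arc_type_digraph_def)
  interpret H: finite_arc_type_digraph "full_part G"
    using fin_digraph_full_part[OF assms(1)] by (simp add: finite_arc_type_digraph_def)
  have "aff_dim (cycle_polytope G) = int (dim (simple_cycle_vecs G)) - 1"
    using aff_dim_subset_hyperplane[OF simple_cycle_vecs_subset_hyperplane]
    by (simp add: cycle_polytope_def aff_dim_convex_hull flip: simple_cycle_vecs_def)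
  also have "dim (simple_cycle_vecs G) = dim (cycle_space (full_part G))"
    by (metis dim_span span_simple_cycle_vecs)
  finally show ?thesis
    using arg_cong[OF H.dim_cycle_space, of int] by simp
qed

end
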